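(* Let $k$ be an integer and let $\mathbf{x}\in\mathcal{A}_k$, where $\mathbf{x}$ is a vertex of $P^n_{\mathrm{SEP}}$ (so $\mathbf{x}$ has $n$ nodes). Then $k+3\le n\le 2k$.
   Context: $K_n=(V_n,E_n)$ is the complete undirected graph on $n$ nodes; $\delta(S)$ is the set of edges with exactly one endpoint in $S\subseteq V_n$. $P^n_{\mathrm{SEP}}=\{\mathbf{x}\in\mathbb{R}^{E_n} : \sum_{e\in\delta(v)}x_e=2\ \forall v;\ \sum_{e\in\delta(S)}x_e\ge 2\ \forall S \text{ with } 3\le|S|\le n-3;\ 0\le x_e\le 1\}$. A vertex is an extreme point of $P^n_{\mathrm{SEP}}$; it is fractional if it is not integral. The support graph of $\mathbf{x}$ is $G_{\mathbf{x}}=(V_n,E_{\mathbf{x}})$ with $E_{\mathbf{x}}=\{e: x_e>0\}$. $\mathcal{F}_k$ is the set of all fractional vertices $\mathbf{x}$ of $P^n_{\mathrm{SEP}}$, over all $n$, with $|E_{\mathbf{x}}|=n+k$; $\mathcal{A}_k$ is the set of $\mathbf{x}\in\mathcal{F}_k$ whose support graph $G_{\mathbf{x}}$ has no node of degree $2$. *)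

theory Defs
  imports "HOL-Analysis.Analysis"
begin

text \<open>Complete graph K_n on node set V_n = {0..<n}; edges are 2-element node sets.
  A point of R^{E_n} is a function on edge sets that vanishes off E_n.\<close>

definition V :: "nat \<Rightarrow> nat set" where
  "V n = {0..<n}"

definition E :: "nat \<Rightarrow> nat set set" where
  "E n = {{i, j} | i j. i < n \<and> j < n \<and> i \<noteq> j}"

definition cut :: "nat \<Rightarrow> nat set \<Rightarrow> nat set set" where
  "cut n S = {e \<in> E n. card (e \<inter> S) = 1}"

definition P_SEP :: "nat \<Rightarrow> (nat set \<Rightarrow> real) set" where
  "P_SEP n = {x. (\<forall>e. e \<notin> E n \<longrightarrow> x e = 0)
     \<and> (\<forall>v \<in> V n. (\<Sum>e\<in>cut n {v}. x e) = 2)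
     \<and> (\<forall>S. S \<subseteq> V n \<and> 3 \<le> card S \<and> card S \<le> n - 3 \<longrightarrow> (\<Sum>e\<in>cut n S. x e) \<ge> 2)
     \<and> (\<forall>e \<in> E n. 0 \<le> x e \<and> x e \<le> 1)}"

definition is_vertex :: "(nat set \<Rightarrow> real) \<Rightarrow> (nat set \<Rightarrow> real) set \<Rightarrow> bool" where
  "is_vertex x P \<longleftrightarrow> x \<in> P \<and>
     \<not> (\<exists>y \<in> P. \<exists>z \<in> P. y \<noteq> z \<and> (\<exists>u::real. 0 < u \<and> u < 1 \<and> x = (\<lambda>e. (1 - u) * y e + u * z e)))"

definition fractional :: "nat \<Rightarrow> (nat set \<Rightarrow> real) \<Rightarrow> bool" where
  "fractional n x \<longleftrightarrow> (\<exists>e \<in> E n. x e \<notin> \<int>)"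

definition support :: "nat \<Rightarrow> (nat set \<Rightarrow> real) \<Rightarrow> nat set set" where
  "support n x = {e \<in> E n. x e > 0}"

definition support_degree :: "nat \<Rightarrow> (nat set \<Rightarrow> real) \<Rightarrow> nat \<Rightarrow> nat" where
  "support_degree n x v = card {e \<in> support n x. v \<in> e}"

definition in_A :: "int \<Rightarrow> nat \<Rightarrow> (nat set \<Rightarrow> real) \<Rightarrow> bool" where
  "in_A k n x \<longleftrightarrow> is_vertex x (P_SEP n) \<and> fractional n x
     \<and> int (card (support n x)) = int n + k
     \<and> (\<forall>v \<in> V n. support_degree n x v \<noteq> 2)"

end

(*
  Every node has support degree at least 3: the degree equation together with x \<le> 1
  forces degree at least 2, and degree 2 is excluded. Counting edge ends gives
  3n \<le> 2|E_x| = 2(n + k), i.e. n \<le> 2k.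

  For the lower bound, a vertex is the unique solution of its tight constraints restricted
  to the support. Edges of value 1 are fixed by the tight cut of their two endpoints, and
  by uncrossing every tight cut is spanned by the n degree equations and the cuts of a
  maximal laminar family of tight sets avoiding node 0. Such a family lives on n - 1 nodes,
  has members of size at least 2 and omits the whole ground set, so it has at most n - 3
  members. Hence |E_x| \<le> 2n - 3, i.e. k + 3 \<le> n.
*)
theory Submission
  imports Defs
begin

lemma finite_E: "finite (E n)"
  by (rule finite_subset[of _ "Pow {0..<n}"]) (auto simp: E_def)

lemma E_pairE:
  assumes "e \<in> E n"
  obtains i j where "e = {i, j}" "i \<noteq> j" "i < n" "j < n"
  using assms unfolding E_def by blast

lemma doubleton_in_E: "i < n \<Longrightarrow> j < n \<Longrightarrow> i \<noteq> j \<Longrightarrow> {i, j} \<in> E n"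
  unfolding E_def by blast

lemma card_doubleton_Int:
  "i \<noteq> j \<Longrightarrow> card ({i, j} \<inter> S) = of_bool (i \<in> S) + of_bool (j \<in> S)"
  by (cases "i \<in> S"; cases "j \<in> S") auto

lemma cut_singleton: "cut n {v} = {e \<in> E n. v \<in> e}"
proof -
  have "card (e \<inter> {v}) = 1 \<longleftrightarrow> v \<in> e" for e :: "nat set"
    by (cases "v \<in> e") auto
  then show ?thesis unfolding cut_def by blast
qed

lemma cut_complement: "cut n ({0..<n} - S) = cut n S"
proof -
  have "card (e \<inter> ({0..<n} - S)) = 1 \<longleftrightarrow> card (e \<inter> S) = 1" if "e \<in> E n" for e
    using that by (rule E_pairE) (auto simp: card_doubleton_Int)
  then show ?thesis unfolding cut_def by blast
qed

lemma finite_cut: "finite (cut n S)"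
  unfolding cut_def using finite_E by simp

lemma sum_cut_conv: "sum y (cut n S) = (\<Sum>e\<in>E n. if card (e \<inter> S) = 1 then y e else 0)"
  unfolding cut_def by (simp add: sum.inter_filter[OF finite_E])

lemma sum_cut_Int_Un:
  fixes y :: "nat set \<Rightarrow> real"
  shows "sum y (cut n S) + sum y (cut n T) = sum y (cut n (S \<inter> T)) + sum y (cut n (S \<union> T))
     + 2 * (\<Sum>e\<in>E n. if e \<inter> (S - T) \<noteq> {} \<and> e \<inter> (T - S) \<noteq> {} then y e else 0)"
proof -
  have edge: "(if card (e \<inter> S) = 1 then y e else 0) + (if card (e \<inter> T) = 1 then y e else 0)
      = (if card (e \<inter> (S \<inter> T)) = 1 then y e else 0) + (if card (e \<inter> (S \<union> T)) = 1 then y e else 0)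
        + 2 * (if e \<inter> (S - T) \<noteq> {} \<and> e \<inter> (T - S) \<noteq> {} then y e else 0)"
    if "e \<in> E n" for e
    using that by (rule E_pairE) (simp add: card_doubleton_Int)
  have "(\<Sum>e\<in>E n. (if card (e \<inter> S) = 1 then y e else 0) + (if card (e \<inter> T) = 1 then y e else 0))
      = (\<Sum>e\<in>E n. (if card (e \<inter> (S \<inter> T)) = 1 then y e else 0)
          + (if card (e \<inter> (S \<union> T)) = 1 then y e else 0)
          + 2 * (if e \<inter> (S - T) \<noteq> {} \<and> e \<inter> (T - S) \<noteq> {} then y e else 0))"
    by (rule sum.cong[OF refl edge])
  then show ?thesis
    unfolding sum_cut_conv by (simp add: sum.distrib sum_distrib_left)
qed

lemma sum_cut_doubleton:
  fixes y :: "nat set \<Rightarrow> real"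
  assumes "i < n" "j < n" "i \<noteq> j"
  shows "sum y (cut n {i, j}) = sum y (cut n {i}) + sum y (cut n {j}) - 2 * y {i, j}"
proof -
  have "{e \<in> E n. e \<inter> ({i} - {j}) \<noteq> {} \<and> e \<inter> ({j} - {i}) \<noteq> {}} = {{i, j}}"
    using assms by (auto simp: E_def)
  then have "(\<Sum>e\<in>E n. if e \<inter> ({i} - {j}) \<noteq> {} \<and> e \<inter> ({j} - {i}) \<noteq> {} then y e else 0) = y {i, j}"
    by (simp flip: sum.inter_filter[OF finite_E])
  moreover have "{i} \<inter> {j} = {}" "{i} \<union> {j} = {i, j}"
    using assms by auto
  moreover have "cut n {} = {}"
    unfolding cut_def by simp
  ultimately show ?thesis
    using sum_cut_Int_Un[of y n "{i}" "{j}"] by simp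
qed

lemma homogeneous_system_nontrivial_solution:
  fixes A :: "('e \<Rightarrow> real) set"
  assumes "finite A" "finite F" "card A < card F"
  shows "\<exists>d. (\<forall>e. e \<notin> F \<longrightarrow> d e = 0) \<and> (\<exists>e\<in>F. d e \<noteq> 0) \<and> (\<forall>a\<in>A. (\<Sum>e\<in>F. a e * d e) = 0)"
  using assms
proof (induction "card A" arbitrary: A F rule: less_induct)
  case less
  show ?case
  proof (cases "\<exists>a\<in>A. \<exists>e\<in>F. a e \<noteq> 0")
    case False
    obtain e0 where "e0 \<in> F"
      using less.prems(3) by fastforce
    with False less.prems(2) show ?thesis
      by (intro exI[of _ "\<lambda>e. of_bool (e = e0)"]) auto
  next
    case True
    then obtain a e0 where a: "a \<in> A" "e0 \<in> F" "a e0 \<noteq> 0"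
      by blast
    \<comment> \<open>Eliminate the unknown \<open>d e0\<close> by means of the equation \<open>a\<close>.\<close>
    define F' where "F' = F - {e0}"
    define A' where "A' = (\<lambda>b e. b e - b e0 / a e0 * a e) ` (A - {a})"
    have "card A' \<le> card (A - {a})"
      unfolding A'_def by (rule card_image_le) (use less.prems in simp)
    moreover have "0 < card A"
      using a(1) less.prems(1) card_gt_0_iff by blast
    ultimately have "card A' < card A" "card A' < card F'"
      using a less.prems by (auto simp: F'_def card_Diff_singleton_if)
    moreover have "finite A'" "finite F'"
      using less.prems by (auto simp: A'_def F'_def)
    ultimately obtain d' where d': "\<forall>e. e \<notin> F' \<longrightarrow> d' e = 0" "\<exists>e\<in>F'. d' e \<noteq> 0"
        "\<forall>b\<in>A'. (\<Sum>e\<in>F'. b e * d' e) = 0"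
      using less.hyps by blast
    define d where "d = d'(e0 := - (\<Sum>e\<in>F'. a e * d' e) / a e0)"
    have split: "(\<Sum>e\<in>F. b e * d e) = b e0 * d e0 + (\<Sum>e\<in>F'. b e * d' e)" for b
    proof -
      have "(\<Sum>e\<in>F'. b e * d e) = (\<Sum>e\<in>F'. b e * d' e)"
        by (rule sum.cong) (auto simp: d_def F'_def)
      then show ?thesis
        using sum.remove[OF less.prems(2) a(2), of "\<lambda>e. b e * d e"] by (simp add: F'_def)
    qed
    have "(\<Sum>e\<in>F. b e * d e) = 0" if "b \<in> A - {a}" for b
    proof -
      have "(\<Sum>e\<in>F'. (b e - b e0 / a e0 * a e) * d' e) = 0"
        using d'(3) that by (auto simp: A'_def)
      then have "(\<Sum>e\<in>F'. b e * d' e) - b e0 / a e0 * (\<Sum>e\<in>F'. a e * d' e) = 0"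
        by (simp add: algebra_simps sum_subtractf sum_distrib_left)
      then show ?thesis
        using split[of b] a(3) by (simp add: d_def field_simps)
    qed
    moreover have "(\<Sum>e\<in>F. a e * d e) = 0"
      using split[of a] a(3) by (simp add: d_def)
    moreover have "\<forall>e. e \<notin> F \<longrightarrow> d e = 0" "\<exists>e\<in>F. d e \<noteq> 0"
      using d' a(2) by (auto simp: d_def F'_def)
    ultimately show ?thesis
      by blast
  qed
qed

definition crosses :: "'a set \<Rightarrow> 'a set \<Rightarrow> bool" where
  "crosses A B \<longleftrightarrow> A \<inter> B \<noteq> {} \<and> \<not> A \<subseteq> B \<and> \<not> B \<subseteq> A"

definition laminar :: "'a set set \<Rightarrow> bool" where
  "laminar L \<longleftrightarrow> (\<forall>A\<in>L. \<forall>B\<in>L. \<not> crosses A B)"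

lemma laminar_insert:
  "laminar (insert S L) \<longleftrightarrow> laminar L \<and> (\<forall>A\<in>L. \<not> crosses A S)"
  unfolding laminar_def crosses_def by blast

lemma laminar_image_Diff_singleton:
  "laminar L \<Longrightarrow> M \<subseteq> L \<Longrightarrow> laminar ((\<lambda>X. X - {a}) ` M)"
  unfolding laminar_def crosses_def by blast

lemma laminar_min_card_subset_or_disjoint:
  assumes "laminar L" "S \<in> L" "X \<in> L" "card S \<le> card X" "finite S"
  shows "S \<subseteq> X \<or> S \<inter> X = {}"
proof -
  have "\<not> crosses S X"
    using assms(1-3) unfolding laminar_def by blast
  moreover have "X = S" if "X \<subseteq> S"
  proof -
    have "card X \<le> card S"
      using assms(5) that by (rule card_mono)
    then show ?thesis
      using card_subset_eq[OF assms(5) that] assms(4) by simp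
  qed
  ultimately show ?thesis
    unfolding crosses_def by blast
qed

lemma inj_on_Diff_singleton_nested:
  assumes "\<forall>X\<in>L. S \<subseteq> X \<or> S \<inter> X = {}" "a \<in> S" "S - {a} \<noteq> {}"
  shows "inj_on (\<lambda>X. X - {a}) L"
proof (rule inj_onI)
  fix X Y assume "X \<in> L" "Y \<in> L" "X - {a} = Y - {a}"
  moreover from this have "a \<in> X \<longleftrightarrow> a \<in> Y"
    using assms by blast
  ultimately show "X = Y"
    by blast
qed

text \<open>Induction on the family: deleting a point \<open>a\<close> of a member \<open>S\<close> of least cardinality
  keeps the other members distinct and of size at least 2.\<close>
lemma card_laminar_le:
  assumes "laminar L" "L \<subseteq> Pow U" "finite U" "\<forall>X\<in>L. 2 \<le> card X"
  shows "card L \<le> card U - 1"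
  using assms
proof (induction "card L" arbitrary: L U rule: less_induct)
  case less
  have fin: "finite L" "\<And>X. X \<in> L \<Longrightarrow> finite X"
    using less.prems(2,3) by (auto intro: finite_subset)
  show ?case
  proof (cases "L = {}")
    case False
    then obtain S where S: "S \<in> L" "\<forall>X\<in>L. card S \<le> card X"
      using ex_has_least_nat[of "\<lambda>X. X \<in> L" _ card] by blast
    have "2 \<le> card S"
      using S(1) less.prems(4) by blast
    then obtain a where "a \<in> S"
      by fastforce
    have "S - {a} \<noteq> {}"
      using \<open>2 \<le> card S\<close> card_Diff_singleton[OF \<open>a \<in> S\<close>] by force
    have nested: "\<forall>X\<in>L. S \<subseteq> X \<or> S \<inter> X = {}"
      using laminar_min_card_subset_or_disjoint[OF less.prems(1) S(1)] S(2) fin(2)[OF S(1)] by blast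
    define L' where "L' = (\<lambda>X. X - {a}) ` (L - {S})"
    have card_L': "card L' = card L - 1"
      using inj_on_Diff_singleton_nested[of "L - {S}" S a] nested \<open>a \<in> S\<close> \<open>S - {a} \<noteq> {}\<close> S(1) fin(1)
      by (simp add: L'_def card_image)
    have "2 \<le> card (X - {a})" if "X \<in> L - {S}" for X
    proof (cases "a \<in> X")
      case True
      then have "S \<subset> X"
        using nested that \<open>a \<in> S\<close> by blast
      then have "card S < card X"
        using that by (intro psubset_card_mono fin(2)) auto
      then show ?thesis
        using True \<open>2 \<le> card S\<close> by simp
    qed (use that less.prems(4) in simp)
    then have "\<forall>X'\<in>L'. 2 \<le> card X'"
      unfolding L'_def by blast
    moreover have "laminar L'"
      unfolding L'_def using less.prems(1) by (rule laminar_image_Diff_singleton) blast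
    moreover have "L' \<subseteq> Pow (U - {a})"
      using less.prems(2) unfolding L'_def by blast
    moreover have "0 < card L"
      using S(1) fin(1) card_gt_0_iff by blast
    then have "card L' < card L"
      using card_L' by simp
    ultimately have "card L' \<le> card (U - {a}) - 1"
      using less.hyps less.prems(3) by (metis finite_Diff)
    moreover have "a \<in> U" "2 \<le> card U"
      using S(1) less.prems(2) \<open>a \<in> S\<close> \<open>2 \<le> card S\<close> card_mono[OF less.prems(3), of S] by auto
    ultimately show ?thesis
      using card_L' \<open>0 < card L\<close> by (simp add: card_Diff_singleton)
  qed simp
qed

lemma crossing_members_Int_Un_psubset:
  assumes "laminar L" "T \<in> L" "crosses T S"
  shows "{R \<in> L. crosses R (S \<inter> T)} \<subset> {R \<in> L. crosses R S}"
    and "{R \<in> L. crosses R (S \<union> T)} \<subset> {R \<in> L. crosses R S}"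
proof -
  have "\<not> crosses R T" if "R \<in> L" for R
    using assms(1,2) that unfolding laminar_def by blast
  then show "{R \<in> L. crosses R (S \<inter> T)} \<subset> {R \<in> L. crosses R S}"
      "{R \<in> L. crosses R (S \<union> T)} \<subset> {R \<in> L. crosses R S}"
    using assms(2,3) unfolding crosses_def by blast+
qed

lemma sum_of_bool_mult_eq_sum:
  fixes d :: "'a \<Rightarrow> 'b::comm_semiring_1"
  assumes "finite F" "\<And>e. e \<notin> F \<Longrightarrow> d e = 0" "finite C"
  shows "(\<Sum>e\<in>F. of_bool (e \<in> C) * d e) = sum d C"
proof -
  have "(\<Sum>e\<in>F. of_bool (e \<in> C) * d e) = sum d (F \<inter> C)"
    using assms(1) by (simp add: mult.commute Int_def)
  also have "\<dots> = sum d C"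
    using assms by (intro sum.mono_neutral_left) auto
  finally show ?thesis .
qed

lemma finite_support: "finite (support n x)"
  unfolding support_def using finite_E by simp

lemma support_degree_le:
  assumes "v < n"
  shows "support_degree n x v \<le> n - 1"
proof -
  have "{e \<in> support n x. v \<in> e} \<subseteq> (\<lambda>u. {v, u}) ` ({0..<n} - {v})"
    by (auto simp: support_def elim!: E_pairE)
  then have "support_degree n x v \<le> card ((\<lambda>u. {v, u}) ` ({0..<n} - {v}))"
    unfolding support_degree_def by (intro card_mono) auto
  also have "\<dots> \<le> card ({0..<n} - {v})"
    by (rule card_image_le) simp
  finally show ?thesis
    using assms by simp
qed

lemma sum_support_degree: "(\<Sum>v<n. support_degree n x v) = 2 * card (support n x)"
proof -
  have "support_degree n x v = (\<Sum>e\<in>support n x. of_bool (v \<in> e))" for v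
    using finite_support[of n x] by (simp add: support_degree_def Int_def)
  then have "(\<Sum>v<n. support_degree n x v) = (\<Sum>v<n. \<Sum>e\<in>support n x. of_bool (v \<in> e))"
    by simp
  also have "\<dots> = (\<Sum>e\<in>support n x. \<Sum>v<n. of_bool (v \<in> e))"
    by (rule sum.swap)
  also have "\<dots> = (\<Sum>e\<in>support n x. 2)"
  proof (rule sum.cong[OF refl])
    fix e assume "e \<in> support n x"
    then obtain i j where "e = {i, j}" "i \<noteq> j" "i < n" "j < n"
      unfolding support_def by (blast elim: E_pairE)
    then have "{..<n} \<inter> {v. v \<in> e} = {i, j}"
      by auto
    then show "(\<Sum>v<n. of_bool (v \<in> e)) = (2::nat)"
      using \<open>i \<noteq> j\<close> by simp
  qed
  finally show ?thesis
    by simp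
qed

lemma exists_pos_mult_abs_le:
  fixes b c :: "'i \<Rightarrow> real"
  assumes "finite I" "\<And>i. i \<in> I \<Longrightarrow> 0 \<le> c i" "\<And>i. i \<in> I \<Longrightarrow> b i = 0 \<or> 0 < c i"
  obtains \<epsilon> where "0 < \<epsilon>" "\<And>i. i \<in> I \<Longrightarrow> \<epsilon> * \<bar>b i\<bar> \<le> c i"
proof -
  have "eventually (\<lambda>\<epsilon>. \<epsilon> * \<bar>b i\<bar> \<le> c i) (at_right 0)" if "i \<in> I" for i
  proof (cases "b i = 0")
    case False
    have "((\<lambda>\<epsilon>. \<epsilon> * \<bar>b i\<bar>) \<longlongrightarrow> 0 * \<bar>b i\<bar>) (at_right 0)"
      by (intro tendsto_mult tendsto_ident_at tendsto_const)
    moreover have "0 * \<bar>b i\<bar> < c i"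
      using assms(3)[OF that] False by simp
    ultimately have "eventually (\<lambda>\<epsilon>. \<epsilon> * \<bar>b i\<bar> < c i) (at_right 0)"
      by (rule order_tendstoD(2))
    then show ?thesis
      by (rule eventually_mono) simp
  qed (use assms(2)[OF that] in simp)
  then have "eventually (\<lambda>\<epsilon>. 0 < \<epsilon> \<and> (\<forall>i\<in>I. \<epsilon> * \<bar>b i\<bar> \<le> c i)) (at_right (0::real))"
    using assms(1) by (intro eventually_conj eventually_at_right_less eventually_ball_finite) auto
  moreover have "at_right (0::real) \<noteq> bot"
    using trivial_limit_at_right_real by blast
  ultimately obtain \<epsilon> where "0 < \<epsilon> \<and> (\<forall>i\<in>I. \<epsilon> * \<bar>b i\<bar> \<le> c i)"
    using eventually_happens' by blast
  then show thesis
    using that by blast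
qed

lemma is_vertex_perturbation_eq_0:
  fixes x d :: "nat set \<Rightarrow> real"
  assumes "is_vertex x P" "(\<lambda>e. x e + t * d e) \<in> P" "(\<lambda>e. x e - t * d e) \<in> P" "t \<noteq> 0"
  shows "d e = 0"
proof (rule ccontr)
  assume "d e \<noteq> 0"
  let ?y = "\<lambda>e. x e + t * d e" and ?z = "\<lambda>e. x e - t * d e"
  have "?y e \<noteq> ?z e"
    using \<open>d e \<noteq> 0\<close> assms(4) by simp
  then have "?y \<noteq> ?z"
    by metis
  moreover have "x = (\<lambda>e. (1 - 1 / 2) * ?y e + 1 / 2 * ?z e)"
    by (simp add: algebra_simps)
  ultimately have "\<exists>y\<in>P. \<exists>z\<in>P. y \<noteq> z \<and> (\<exists>u::real. 0 < u \<and> u < 1 \<and> x = (\<lambda>e. (1 - u) * y e + u * z e))"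
    using assms(2,3) by (intro bexI[of _ ?y] bexI[of _ ?z] conjI exI[of _ "1 / 2"]) auto
  with assms(1) show False
    unfolding is_vertex_def by blast
qed

locale sep_point =
  fixes n :: nat and x :: "nat set \<Rightarrow> real"
  assumes in_P_SEP: "x \<in> P_SEP n"
begin

lemma zero_outside_E: "e \<notin> E n \<Longrightarrow> x e = 0"
  and sum_cut_singleton: "v < n \<Longrightarrow> sum x (cut n {v}) = 2"
  and subtour_elimination: "S \<subseteq> {0..<n} \<Longrightarrow> 3 \<le> card S \<Longrightarrow> card S \<le> n - 3 \<Longrightarrow> 2 \<le> sum x (cut n S)"
  and nonneg: "e \<in> E n \<Longrightarrow> 0 \<le> x e"
  and le_one: "e \<in> E n \<Longrightarrow> x e \<le> 1"
  using in_P_SEP unfolding P_SEP_def V_def by auto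

lemma sum_cut_small_ge_2:
  assumes "S \<subseteq> {0..<n}" "S \<noteq> {}" "card S \<le> 2"
  shows "2 \<le> sum x (cut n S)"
proof -
  have "card S \<noteq> 0"
    using assms(1,2) finite_subset by fastforce
  then consider "card S = 1" | "card S = 2"
    using assms(3) by linarith
  then show ?thesis
  proof cases
    case 1
    then obtain v where "S = {v}"
      by (rule card_1_singletonE)
    then show ?thesis
      using sum_cut_singleton assms(1) by simp
  next
    case 2
    then obtain i j where ij: "S = {i, j}" "i \<noteq> j"
      by (meson card_2_iff)
    then have "i < n" "j < n"
      using assms(1) by auto
    then show ?thesis
      using le_one[OF doubleton_in_E] ij
      by (simp add: sum_cut_doubleton sum_cut_singleton)
  qed
qed

lemma sum_cut_ge_2:
  assumes S: "S \<subseteq> {0..<n}" "S \<noteq> {}" "S \<noteq> {0..<n}"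
  shows "2 \<le> sum x (cut n S)"
proof -
  have card_compl: "card ({0..<n} - S) = n - card S"
    using S(1) by (simp add: card_Diff_subset finite_subset)
  consider "card S \<le> 2" | "3 \<le> card S" "card S \<le> n - 3" | "n - 3 < card S"
    by linarith
  then show ?thesis
  proof cases
    case 3
    then have "card ({0..<n} - S) \<le> 2"
      using card_compl by linarith
    moreover have "{0..<n} - S \<noteq> {}"
      using S by blast
    ultimately show ?thesis
      using sum_cut_small_ge_2[of "{0..<n} - S"] by (simp add: cut_complement)
  qed (use S sum_cut_small_ge_2 subtour_elimination in auto)
qed

lemma support_degree_ge_2:
  assumes "v < n"
  shows "2 \<le> support_degree n x v"
proof -
  have "2 = sum x {e \<in> E n. v \<in> e}"
    using sum_cut_singleton[OF assms] by (simp add: cut_singleton)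
  also have "\<dots> = sum x {e \<in> support n x. v \<in> e}"
    by (rule sum.mono_neutral_right)
      (use finite_E nonneg in \<open>auto simp: support_def order_less_le\<close>)
  also have "\<dots> \<le> of_nat (card {e \<in> support n x. v \<in> e}) * 1"
    by (rule sum_bounded_above) (auto simp: support_def le_one)
  finally show ?thesis
    unfolding support_degree_def by simp
qed

lemma tight_Int_Un:
  assumes "S \<subseteq> {1..<n}" "T \<subseteq> {1..<n}" "S \<inter> T \<noteq> {}"
    and "sum x (cut n S) = 2" "sum x (cut n T) = 2"
  shows "sum x (cut n (S \<inter> T)) = 2" "sum x (cut n (S \<union> T)) = 2"
    and "e \<in> E n \<Longrightarrow> e \<inter> (S - T) \<noteq> {} \<Longrightarrow> e \<inter> (T - S) \<noteq> {} \<Longrightarrow> x e = 0"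
proof -
  define P where "P e \<longleftrightarrow> e \<inter> (S - T) \<noteq> {} \<and> e \<inter> (T - S) \<noteq> {}" for e
  have "0 \<notin> S \<union> T" "0 \<in> {0..<n}"
    using assms(1-3) by auto
  then have proper: "S \<inter> T \<noteq> {0..<n}" "S \<union> T \<noteq> {0..<n}"
    by blast+
  have sub: "S \<inter> T \<subseteq> {0..<n}" "S \<union> T \<subseteq> {0..<n}"
    using assms(1,2) by auto
  have "2 \<le> sum x (cut n (S \<inter> T))"
    using sum_cut_ge_2[OF sub(1) assms(3) proper(1)] .
  moreover have "2 \<le> sum x (cut n (S \<union> T))"
    using sum_cut_ge_2[OF sub(2) _ proper(2)] assms(3) by blast
  moreover have nonneg_P: "\<And>e. e \<in> E n \<Longrightarrow> 0 \<le> (if P e then x e else 0)"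
    by (simp add: nonneg)
  then have "0 \<le> (\<Sum>e\<in>E n. if P e then x e else 0)"
    by (simp add: sum_nonneg)
  moreover note sum_cut_Int_Un[of x n S T, folded P_def]
  ultimately have "sum x (cut n (S \<inter> T)) = 2" "sum x (cut n (S \<union> T)) = 2"
    and defect: "(\<Sum>e\<in>E n. if P e then x e else 0) = 0"
    using assms(4,5) by linarith+
  then show "sum x (cut n (S \<inter> T)) = 2" "sum x (cut n (S \<union> T)) = 2"
    by simp_all
  have all_0: "\<forall>e\<in>E n. (if P e then x e else 0) = 0"
    using sum_nonneg_eq_0_iff[of "E n" "\<lambda>e. if P e then x e else 0"] finite_E nonneg_P defect
    by blast
  assume "e \<in> E n" "e \<inter> (S - T) \<noteq> {}" "e \<inter> (T - S) \<noteq> {}"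
  then have "P e" "(if P e then x e else 0) = 0"
    using all_0 unfolding P_def by blast+
  then show "x e = 0"
    by simp
qed

text \<open>Each cut is represented by its shore avoiding node 0. Singletons and \<open>{1..<n}\<close>
  are excluded: their cuts are degree cuts.\<close>
definition tight_sets :: "nat set set" where
  "tight_sets = {S. S \<subseteq> {1..<n} \<and> 2 \<le> card S \<and> S \<noteq> {1..<n} \<and> sum x (cut n S) = 2}"

lemma finite_tight_sets: "finite tight_sets"
  by (rule finite_subset[of _ "Pow {1..<n}"]) (auto simp: tight_sets_def)

lemma card_laminar_tight_le:
  assumes "3 \<le> n" "L \<subseteq> tight_sets" "laminar L"
  shows "card L + 3 \<le> n"
proof -
  have "finite L"
    using assms(2) finite_tight_sets finite_subset by blast
  have L_sub: "L \<subseteq> Pow {1..<n}" and "{1..<n} \<notin> L"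
    using assms(2) by (auto simp: tight_sets_def)
  then have "laminar (insert {1..<n} L)"
    using assms(3) by (auto simp: laminar_insert crosses_def)
  moreover have "\<forall>X\<in>insert {1..<n} L. 2 \<le> card X"
    using assms(1,2) by (auto simp: tight_sets_def)
  ultimately have "card (insert {1..<n} L) \<le> card {1..<n} - 1"
    using L_sub by (intro card_laminar_le) auto
  then show ?thesis
    using \<open>{1..<n} \<notin> L\<close> \<open>finite L\<close> assms(1) by simp
qed

lemma tight_direction_eq_0_at_one:
  fixes d :: "nat set \<Rightarrow> real"
  assumes "3 \<le> n"
    and d_degree: "\<And>v. v < n \<Longrightarrow> sum d (cut n {v}) = 0"
    and d_tight: "\<And>S. S \<subseteq> {0..<n} \<Longrightarrow> S \<noteq> {} \<Longrightarrow> S \<noteq> {0..<n} \<Longrightarrow> sum x (cut n S) = 2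
      \<Longrightarrow> sum d (cut n S) = 0"
    and "e \<in> E n" "x e = 1"
  shows "d e = 0"
proof -
  obtain i j where ij: "e = {i, j}" "i \<noteq> j" "i < n" "j < n"
    using \<open>e \<in> E n\<close> by (rule E_pairE)
  \<comment> \<open>An edge of value 1 makes its two endpoints a tight set.\<close>
  have "sum x (cut n {i, j}) = 2"
    using ij \<open>x e = 1\<close> by (simp add: sum_cut_doubleton sum_cut_singleton)
  moreover have "{i, j} \<noteq> {0..<n}"
  proof
    assume "{i, j} = {0..<n}"
    then have "card {i, j} = n"
      by simp
    with ij(2) \<open>3 \<le> n\<close> show False
      by simp
  qed
  ultimately have "sum d (cut n {i, j}) = 0"
    using d_tight ij by auto
  then show ?thesis
    using sum_cut_doubleton[OF ij(3,4,2), of d] d_degree ij by simp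
qed

context
  fixes L :: "nat set set" and d :: "nat set \<Rightarrow> real"
  assumes L_tight: "L \<subseteq> tight_sets" and L_laminar: "laminar L"
    and L_maximal: "\<And>S. S \<in> tight_sets \<Longrightarrow> laminar (insert S L) \<Longrightarrow> S \<in> L"
    and d_support: "\<And>e. e \<notin> support n x \<Longrightarrow> d e = 0"
    and d_degree: "\<And>v. v < n \<Longrightarrow> sum d (cut n {v}) = 0"
    and d_L: "\<And>S. S \<in> L \<Longrightarrow> sum d (cut n S) = 0"
begin

lemma sum_cut_direction_Int_Un:
  assumes "S \<subseteq> {1..<n}" "T \<subseteq> {1..<n}" "S \<inter> T \<noteq> {}"
    and "sum x (cut n S) = 2" "sum x (cut n T) = 2"
  shows "sum d (cut n S) + sum d (cut n T) = sum d (cut n (S \<inter> T)) + sum d (cut n (S \<union> T))"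
proof -
  have "(if e \<inter> (S - T) \<noteq> {} \<and> e \<inter> (T - S) \<noteq> {} then d e else 0) = 0" if "e \<in> E n" for e
    using tight_Int_Un(3)[OF assms that] d_support that by (auto simp: support_def)
  then show ?thesis
    using sum_cut_Int_Un[of d n S T] by simp
qed

lemma sum_cut_direction_uncrossed:
  assumes "S \<subseteq> {1..<n}" "S \<noteq> {}" "sum x (cut n S) = 2" "\<forall>T\<in>L. \<not> crosses T S"
  shows "sum d (cut n S) = 0"
proof -
  have "card S \<noteq> 0"
    using assms(1,2) finite_subset by fastforce
  then have "card S = 1 \<or> 2 \<le> card S"
    by linarith
  then consider "card S = 1" | "S = {1..<n}" | "S \<in> tight_sets"
    using assms by (auto simp: tight_sets_def)
  then show ?thesis
  proof cases
    case 1
    then obtain v where "S = {v}"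
      by (rule card_1_singletonE)
    then show ?thesis
      using d_degree assms(1) by simp
  next
    case 2
    then have "{0..<n} - S = {0}" "0 < n"
      using assms(2) by auto
    then have "cut n S = cut n {0}"
      using cut_complement[of n S] by simp
    then show ?thesis
      using d_degree \<open>0 < n\<close> by simp
  next
    case 3
    moreover have "laminar (insert S L)"
      using L_laminar assms(4) by (simp add: laminar_insert)
    ultimately show ?thesis
      using L_maximal d_L by blast
  qed
qed

text \<open>Uncrossing, by induction on the number of members of \<open>L\<close> crossing \<open>S\<close>: if \<open>T \<in> L\<close>
  crosses \<open>S\<close>, then \<open>S \<inter> T\<close> and \<open>S \<union> T\<close> are tight and cross fewer members of \<open>L\<close>.\<close>
lemma sum_cut_direction_tight_avoiding_0:
  assumes "S \<subseteq> {1..<n}" "S \<noteq> {}" "sum x (cut n S) = 2"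
  shows "sum d (cut n S) = 0"
  using assms
proof (induction "card {R \<in> L. crosses R S}" arbitrary: S rule: less_induct)
  case less
  show ?case
  proof (cases "\<exists>T\<in>L. crosses T S")
    case False
    then show ?thesis
      using sum_cut_direction_uncrossed less.prems by blast
  next
    case True
    then obtain T where T: "T \<in> L" "crosses T S"
      by blast
    have T_tight: "T \<subseteq> {1..<n}" "sum x (cut n T) = 2"
      using T(1) L_tight by (auto simp: tight_sets_def)
    have "S \<inter> T \<noteq> {}"
      using T(2) unfolding crosses_def by blast
    note tight_S_T = less.prems(1) T_tight(1) \<open>S \<inter> T \<noteq> {}\<close> less.prems(3) T_tight(2)
    have finite_L: "finite L"
      using L_tight finite_tight_sets finite_subset by blast
    have "sum d (cut n (S \<inter> T)) = 0"
    proof (rule less.hyps)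
      show "card {R \<in> L. crosses R (S \<inter> T)} < card {R \<in> L. crosses R S}"
        using crossing_members_Int_Un_psubset(1)[OF L_laminar T] finite_L
        by (intro psubset_card_mono) auto
    qed (use less.prems(1) \<open>S \<inter> T \<noteq> {}\<close> tight_Int_Un(1)[OF tight_S_T] in auto)
    moreover have "sum d (cut n (S \<union> T)) = 0"
    proof (rule less.hyps)
      show "card {R \<in> L. crosses R (S \<union> T)} < card {R \<in> L. crosses R S}"
        using crossing_members_Int_Un_psubset(2)[OF L_laminar T] finite_L
        by (intro psubset_card_mono) auto
    qed (use less.prems(1,2) T_tight(1) tight_Int_Un(2)[OF tight_S_T] in auto)
    moreover have "sum d (cut n T) = 0"
      using d_L T(1) by blast
    ultimately show ?thesis
      using sum_cut_direction_Int_Un[OF tight_S_T] by simp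
  qed
qed

lemma sum_cut_direction_tight:
  assumes "S \<subseteq> {0..<n}" "S \<noteq> {}" "S \<noteq> {0..<n}" "sum x (cut n S) = 2"
  shows "sum d (cut n S) = 0"
proof (cases "0 \<in> S")
  case True
  have "y \<in> {1..<n}" if "y \<in> {0..<n} - S" for y
    using that True by (cases y) auto
  moreover have "{0..<n} - S \<noteq> {}"
    using assms(1,3) by blast
  ultimately have "{0..<n} - S \<subseteq> {1..<n}" "{0..<n} - S \<noteq> {}"
    by blast+
  then show ?thesis
    using sum_cut_direction_tight_avoiding_0[of "{0..<n} - S"] assms(4) by (simp add: cut_complement)
next
  case False
  have "y \<in> {1..<n}" if "y \<in> S" for y
    using that False assms(1) by (cases y) auto
  then have "S \<subseteq> {1..<n}"
    by blast
  then show ?thesis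
    using sum_cut_direction_tight_avoiding_0 assms(2,4) by blast
qed

end

lemma add_scaled_in_P_SEP:
  fixes d :: "nat set \<Rightarrow> real"
  assumes "\<And>e. e \<notin> E n \<Longrightarrow> d e = 0"
    and "\<And>v. v < n \<Longrightarrow> sum d (cut n {v}) = 0"
    and cut_bound: "\<And>S. S \<subseteq> {0..<n} \<Longrightarrow> S \<noteq> {} \<Longrightarrow> S \<noteq> {0..<n}
      \<Longrightarrow> \<bar>t * sum d (cut n S)\<bar> \<le> sum x (cut n S) - 2"
    and edge_bound: "\<And>e. e \<in> E n \<Longrightarrow> \<bar>t * d e\<bar> \<le> min (x e) (1 - x e)"
  shows "(\<lambda>e. x e + t * d e) \<in> P_SEP n"
proof -
  have sum_cut: "(\<Sum>e\<in>cut n S. x e + t * d e) = sum x (cut n S) + t * sum d (cut n S)" for S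
    by (simp add: sum.distrib sum_distrib_left)
  have "2 \<le> (\<Sum>e\<in>cut n S. x e + t * d e)"
    if "S \<subseteq> {0..<n}" "3 \<le> card S" "card S \<le> n - 3" for S
  proof -
    have "S \<noteq> {}" "S \<noteq> {0..<n}"
      using that by auto
    then have "\<bar>t * sum d (cut n S)\<bar> \<le> sum x (cut n S) - 2"
      using cut_bound that(1) by blast
    then show ?thesis
      unfolding sum_cut by (simp add: abs_le_iff)
  qed
  moreover have "0 \<le> x e + t * d e \<and> x e + t * d e \<le> 1" if "e \<in> E n" for e
    using edge_bound[OF that] by (simp add: abs_le_iff)
  moreover have "x e + t * d e = 0" if "e \<notin> E n" for e
    using that zero_outside_E assms(1) by simp
  moreover have "(\<Sum>e\<in>cut n {v}. x e + t * d e) = 2" if "v < n" for v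
    using that sum_cut_singleton assms(2) by (simp add: sum_cut)
  ultimately show ?thesis
    unfolding P_SEP_def V_def by simp
qed

lemma perturbation_in_P_SEP:
  fixes d :: "nat set \<Rightarrow> real"
  assumes d_range: "\<And>e. d e \<noteq> 0 \<Longrightarrow> e \<in> E n \<and> 0 < x e \<and> x e < 1"
    and d_degree: "\<And>v. v < n \<Longrightarrow> sum d (cut n {v}) = 0"
    and d_tight: "\<And>S. S \<subseteq> {0..<n} \<Longrightarrow> S \<noteq> {} \<Longrightarrow> S \<noteq> {0..<n} \<Longrightarrow> sum x (cut n S) = 2
      \<Longrightarrow> sum d (cut n S) = 0"
  obtains \<epsilon> where "0 < \<epsilon>" "\<And>t. \<bar>t\<bar> \<le> \<epsilon> \<Longrightarrow> (\<lambda>e. x e + t * d e) \<in> P_SEP n"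
proof -
  let ?proper = "{S. S \<subseteq> {0..<n} \<and> S \<noteq> {} \<and> S \<noteq> {0..<n}}"
  obtain \<epsilon>\<^sub>1 where "0 < \<epsilon>\<^sub>1"
    and \<epsilon>_cut: "\<And>S. S \<in> ?proper \<Longrightarrow> \<epsilon>\<^sub>1 * \<bar>sum d (cut n S)\<bar> \<le> sum x (cut n S) - 2"
  proof (rule exists_pos_mult_abs_le)
    show "finite ?proper"
      by (rule finite_subset[of _ "Pow {0..<n}"]) auto
    fix S assume "S \<in> ?proper"
    then have S: "S \<subseteq> {0..<n}" "S \<noteq> {}" "S \<noteq> {0..<n}"
      by simp_all
    then show "0 \<le> sum x (cut n S) - 2"
      using sum_cut_ge_2 by simp
    show "sum d (cut n S) = 0 \<or> 0 < sum x (cut n S) - 2"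
      using sum_cut_ge_2[OF S] d_tight[OF S] by (cases "sum x (cut n S) = 2") auto
  qed blast
  obtain \<epsilon>\<^sub>2 where "0 < \<epsilon>\<^sub>2" and \<epsilon>_edge: "\<And>e. e \<in> E n \<Longrightarrow> \<epsilon>\<^sub>2 * \<bar>d e\<bar> \<le> min (x e) (1 - x e)"
  proof (rule exists_pos_mult_abs_le[OF finite_E])
    fix e assume "e \<in> E n"
    then show "0 \<le> min (x e) (1 - x e)"
      using nonneg le_one by simp
    show "d e = 0 \<or> 0 < min (x e) (1 - x e)"
      using d_range[of e] by auto
  qed blast
  define \<epsilon> where "\<epsilon> = min \<epsilon>\<^sub>1 \<epsilon>\<^sub>2"
  have "(\<lambda>e. x e + t * d e) \<in> P_SEP n" if t: "\<bar>t\<bar> \<le> \<epsilon>" for t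
  proof (rule add_scaled_in_P_SEP)
    have bound: "\<bar>t * b\<bar> \<le> c" if "\<epsilon>' * \<bar>b\<bar> \<le> c" "\<epsilon> \<le> \<epsilon>'" for b c \<epsilon>'
      using t that mult_right_mono[of "\<bar>t\<bar>" \<epsilon>' "\<bar>b\<bar>"] by (simp add: abs_mult)
    show "\<bar>t * sum d (cut n S)\<bar> \<le> sum x (cut n S) - 2"
      if "S \<subseteq> {0..<n}" "S \<noteq> {}" "S \<noteq> {0..<n}" for S
      using bound[OF \<epsilon>_cut] that by (simp add: \<epsilon>_def)
    show "\<bar>t * d e\<bar> \<le> min (x e) (1 - x e)" if "e \<in> E n" for e
      using bound[OF \<epsilon>_edge[OF that]] by (simp add: \<epsilon>_def)
  qed (use d_range d_degree in blast)+
  moreover have "0 < \<epsilon>"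
    using \<open>0 < \<epsilon>\<^sub>1\<close> \<open>0 < \<epsilon>\<^sub>2\<close> by (simp add: \<epsilon>_def)
  ultimately show thesis
    using that by blast
qed

end

locale sep_vertex = sep_point +
  assumes vertex: "is_vertex x (P_SEP n)"
begin

lemma tight_direction_eq_0:
  fixes d :: "nat set \<Rightarrow> real"
  assumes "3 \<le> n"
    and d_support: "\<And>e. e \<notin> support n x \<Longrightarrow> d e = 0"
    and d_degree: "\<And>v. v < n \<Longrightarrow> sum d (cut n {v}) = 0"
    and d_tight: "\<And>S. S \<subseteq> {0..<n} \<Longrightarrow> S \<noteq> {} \<Longrightarrow> S \<noteq> {0..<n} \<Longrightarrow> sum x (cut n S) = 2
      \<Longrightarrow> sum d (cut n S) = 0"
  shows "d e = 0"
proof -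
  have d_range: "f \<in> E n \<and> 0 < x f \<and> x f < 1" if "d f \<noteq> 0" for f
  proof -
    have "f \<in> E n" "0 < x f"
      using that d_support by (auto simp: support_def)
    moreover have "x f \<noteq> 1"
      using tight_direction_eq_0_at_one[OF assms(1) d_degree d_tight] that calculation(1) by blast
    then have "x f < 1"
      using le_one[OF calculation(1)] by linarith
    ultimately show ?thesis
      by blast
  qed
  obtain \<epsilon> where \<epsilon>: "0 < \<epsilon>" "\<And>t. \<bar>t\<bar> \<le> \<epsilon> \<Longrightarrow> (\<lambda>e. x e + t * d e) \<in> P_SEP n"
    using perturbation_in_P_SEP[OF d_range d_degree d_tight] by blast
  have "(\<lambda>e. x e + \<epsilon> * d e) \<in> P_SEP n" "(\<lambda>e. x e - \<epsilon> * d e) \<in> P_SEP n"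
    using \<epsilon>(2)[of \<epsilon>] \<epsilon>(2)[of "- \<epsilon>"] \<epsilon>(1) by simp_all
  then show ?thesis
    using is_vertex_perturbation_eq_0[OF vertex] \<epsilon>(1) by simp
qed

lemma maximal_laminar_tight_family:
  obtains L where "L \<subseteq> tight_sets" "laminar L"
    "\<And>S. S \<in> tight_sets \<Longrightarrow> laminar (insert S L) \<Longrightarrow> S \<in> L"
proof -
  let ?families = "{L. L \<subseteq> tight_sets \<and> laminar L}"
  have "?families \<subseteq> Pow tight_sets"
    by blast
  then have "finite ?families"
    using finite_tight_sets by (simp add: finite_subset)
  moreover have "?families \<noteq> {}"
    using empty_iff[of "{}"] unfolding laminar_def by blast
  ultimately obtain L where L: "L \<in> ?families" and L_max: "\<forall>L'\<in>?families. L \<subseteq> L' \<longrightarrow> L = L'"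
    by (rule finite_has_maximal[THEN bexE])
  show thesis
  proof (rule that)
    show "L \<subseteq> tight_sets" "laminar L"
      using L by simp_all
    fix S assume "S \<in> tight_sets" "laminar (insert S L)"
    then have "insert S L \<in> ?families"
      using L by simp
    then have "L = insert S L"
      using L_max subset_insertI by blast
    then show "S \<in> L"
      by blast
  qed
qed

text \<open>A vertex is the only solution of its tight constraints on the support, and the
  degree cuts together with the cuts of \<open>L\<close> span them.\<close>
lemma card_support_le_laminar:
  assumes "3 \<le> n" and L: "L \<subseteq> tight_sets" "laminar L"
    and L_maximal: "\<And>S. S \<in> tight_sets \<Longrightarrow> laminar (insert S L) \<Longrightarrow> S \<in> L"
  shows "card (support n x) \<le> n + card L"
proof (rule ccontr)
  assume "\<not> card (support n x) \<le> n + card L"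
  have "finite L"
    using L(1) finite_tight_sets finite_subset by blast
  define rows where "rows = (\<lambda>S e. of_bool (e \<in> cut n S) :: real) ` ((\<lambda>v. {v}) ` {0..<n} \<union> L)"
  have "card rows \<le> card ((\<lambda>v. {v}) ` {0..<n} \<union> L)"
    unfolding rows_def by (rule card_image_le) (simp add: \<open>finite L\<close>)
  also have "\<dots> \<le> card ((\<lambda>v. {v}) ` {0..<n}) + card L"
    by (rule card_Un_le)
  also have "\<dots> \<le> n + card L"
    using card_image_le[of "{0..<n}" "\<lambda>v. {v}"] by simp
  finally have "card rows < card (support n x)"
    using \<open>\<not> card (support n x) \<le> n + card L\<close> by linarith
  moreover have "finite rows"
    unfolding rows_def using \<open>finite L\<close> by simp
  ultimately obtain d where d_support: "\<forall>e. e \<notin> support n x \<longrightarrow> d e = 0"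
    and "\<exists>e\<in>support n x. d e \<noteq> 0" and d_rows: "\<forall>a\<in>rows. (\<Sum>e\<in>support n x. a e * d e) = 0"
    using homogeneous_system_nontrivial_solution[OF _ finite_support] by blast
  have d_support': "d e = 0" if "e \<notin> support n x" for e
    using d_support that by simp
  have row_eq_0: "sum d (cut n S) = 0" if "S \<in> (\<lambda>v. {v}) ` {0..<n} \<union> L" for S
  proof -
    have "(\<lambda>e. of_bool (e \<in> cut n S)) \<in> rows"
      unfolding rows_def using that by (rule imageI)
    then have "(\<Sum>e\<in>support n x. of_bool (e \<in> cut n S) * d e) = 0"
      by (rule d_rows[rule_format])
    moreover have "(\<Sum>e\<in>support n x. of_bool (e \<in> cut n S) * d e) = sum d (cut n S)"
      by (rule sum_of_bool_mult_eq_sum) (simp_all add: finite_support finite_cut d_support')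
    ultimately show ?thesis
      by simp
  qed
  have d_degree: "sum d (cut n {v}) = 0" if "v < n" for v
    using row_eq_0 that by simp
  have d_L: "sum d (cut n S) = 0" if "S \<in> L" for S
    using row_eq_0 that by simp
  have "d e = 0" for e
    using tight_direction_eq_0[OF assms(1) d_support' d_degree]
      sum_cut_direction_tight[OF L L_maximal d_support' d_degree d_L] by blast
  with \<open>\<exists>e\<in>support n x. d e \<noteq> 0\<close> show False
    by blast
qed

lemma card_support_le:
  assumes "3 \<le> n"
  shows "card (support n x) + 3 \<le> 2 * n"
proof -
  obtain L where L: "L \<subseteq> tight_sets" "laminar L"
    and L_maximal: "\<And>S. S \<in> tight_sets \<Longrightarrow> laminar (insert S L) \<Longrightarrow> S \<in> L"
    using maximal_laminar_tight_family by blast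
  have "card (support n x) \<le> n + card L"
    using card_support_le_laminar[OF assms L L_maximal] .
  moreover have "card L + 3 \<le> n"
    using card_laminar_tight_le[OF assms L] .
  ultimately show ?thesis
    by linarith
qed

end

theorem mainTheorem3:
  fixes k :: int and n :: nat and x :: "nat set \<Rightarrow> real"
  assumes "in_A k n x"
  shows "k + 3 \<le> int n \<and> int n \<le> 2 * k"
proof -
  from assms have vertex: "is_vertex x (P_SEP n)" and "fractional n x"
    and card_support: "int (card (support n x)) = int n + k"
    and no_degree_2: "\<forall>v\<in>V n. support_degree n x v \<noteq> 2"
    unfolding in_A_def by blast+
  interpret sep_vertex n x
    using vertex by unfold_locales (simp_all add: is_vertex_def)
  have degree_ge_3: "3 \<le> support_degree n x v" if "v < n" for v
  proof -
    have "support_degree n x v \<noteq> 2"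
      using no_degree_2 that by (simp add: V_def)
    then show ?thesis
      using support_degree_ge_2[OF that] by linarith
  qed
  have "0 < n"
    using \<open>fractional n x\<close> by (auto simp: fractional_def elim: E_pairE)
  then have "3 \<le> n"
    using degree_ge_3[of 0] support_degree_le[of 0 n x] by linarith
  have "(\<Sum>v<n. 3) \<le> (\<Sum>v<n. support_degree n x v)"
    by (rule sum_mono) (simp add: degree_ge_3)
  then have "3 * n \<le> 2 * card (support n x)"
    by (simp add: sum_support_degree)
  moreover have "card (support n x) + 3 \<le> 2 * n"
    using card_support_le[OF \<open>3 \<le> n\<close>] .
  ultimately show ?thesis
    using card_support by linarith
qed

end
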